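(* Let $\alpha\ge0$, $\rho\in\mathcal{R}_\alpha$, and $L_\rho(x):=x^\alpha\rho(x)$. Assume further that for every $\eta>0$ the function $x\mapsto x^\eta L_\rho(x)$ is eventually increasing and $x\mapsto x^{-\eta}L_\rho(x)$ is eventually decreasing. Then: (a) If $0\le\alpha<1$, $$\lim_{b\to\infty}\sup_{a\in[0,b)}\Big|\frac{I_\rho(b)-I_\rho(a)}{L_\rho(b)(b^{1-\alpha}-a^{1-\alpha})}-\frac1{1-\alpha}\Big|=0.$$ (b) If $\alpha>1$, $$\lim_{b\to\infty}\sup_{a\in(b,\infty)}\Big|\frac{I_\rho(a)-I_\rho(b)}{L_\rho(b)(b^{1-\alpha}-a^{1-\alpha})}-\frac1{\alpha-1}\Big|=0.$$
   Context: For $\alpha\ge0$, $\mathcal{R}_\alpha$ denotes the set of measurable functions $\rho:[0,\infty)\to(0,1]$ that are regularly varying of order $-\alpha$, i.e. $\lim_{t\to\infty}\rho(\lambda t)/\rho(t)=\lambda^{-\alpha}$ for every $\lambda>0$. $I_\rho(t):=\int_0^t\rho(s)ds$. *)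

theory Defs
  imports "HOL-Analysis.Analysis"
begin

definition regvar :: "real \<Rightarrow> (real \<Rightarrow> real) \<Rightarrow> bool" where
  "regvar \<alpha> \<rho> \<longleftrightarrow> set_borel_measurable borel {0..} \<rho> \<and> (\<forall>t\<ge>0. 0 < \<rho> t \<and> \<rho> t \<le> 1) \<and>
     (\<forall>c>0. ((\<lambda>t. \<rho> (c * t) / \<rho> t) \<longlongrightarrow> c powr (-\<alpha>)) at_top)"

definition Irho :: "(real \<Rightarrow> real) \<Rightarrow> real \<Rightarrow> real" where
  "Irho \<rho> t = (LINT s:{0..t}|lborel. \<rho> s)"

definition Lrho :: "real \<Rightarrow> (real \<Rightarrow> real) \<Rightarrow> real \<Rightarrow> real" where
  "Lrho \<alpha> \<rho> x = x powr \<alpha> * \<rho> x"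

definition ev_incr :: "(real \<Rightarrow> real) \<Rightarrow> bool" where
  "ev_incr f \<longleftrightarrow> (\<exists>x0. \<forall>x y. x0 \<le> x \<longrightarrow> x \<le> y \<longrightarrow> f x \<le> f y)"

definition ev_decr :: "(real \<Rightarrow> real) \<Rightarrow> bool" where
  "ev_decr f \<longleftrightarrow> (\<exists>x0. \<forall>x y. x0 \<le> x \<longrightarrow> x \<le> y \<longrightarrow> f y \<le> f x)"

end

theory Submission
  imports Defs
begin

text \<open>For small \<open>\<eta> > 0\<close> the monotonicity hypotheses yield Potter-type bounds: beyond some \<open>x\<^sub>0\<close>,
  \<open>\<rho>(s)/\<rho>(r)\<close> lies between \<open>(r/s)\<^sup>\<alpha>\<^sup>+\<^sup>\<eta>\<close> and \<open>(r/s)\<^sup>\<alpha>\<^sup>-\<^sup>\<eta>\<close>. Integrating them between \<open>a\<close> and \<open>b\<close>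
  traps \<open>(I\<^sub>\<rho>(b) - I\<^sub>\<rho>(a)) / (L\<^sub>\<rho>(b)(b\<^sup>1\<^sup>-\<^sup>\<alpha> - a\<^sup>1\<^sup>-\<^sup>\<alpha>))\<close> between \<open>1/(1-\<alpha>+\<eta>)\<close> and
  \<open>1/(1-\<alpha>-\<eta>)\<close> as soon as \<open>a, b \<ge> x\<^sub>0\<close>; this settles \<open>\<alpha> > 1\<close>. For \<open>\<alpha> < 1\<close> the part of the integral
  below \<open>x\<^sub>0\<close> is at most \<open>x\<^sub>0\<close>, while \<open>L\<^sub>\<rho>(b) b\<^sup>1\<^sup>-\<^sup>\<alpha> = \<rho>(b) b\<close> tends to infinity, so small \<open>a\<close> only add
  a vanishing error.\<close>

lemma has_integral_scaled_powr:
  fixes c r p u v :: real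
  assumes "0 < u" "u \<le> v" "0 < r" "p \<noteq> 1"
  shows "((\<lambda>s. c * (r/s) powr p) has_integral c * r * ((v/r) powr (1-p) - (u/r) powr (1-p)) / (1-p)) {u..v}"
proof -
  define F where "F s = c * r powr p * s powr (1-p) / (1-p)" for s
  have "((\<lambda>s. c * (r/s) powr p) has_integral F v - F u) {u..v}"
  proof (rule fundamental_theorem_of_calculus[OF assms(2)])
    fix s assume "s \<in> {u..v}"
    then have "0 < s" using assms by auto
    have "(F has_real_derivative c * r powr p * ((1-p) * s powr (1-p-1)) / (1-p)) (at s)"
      unfolding F_def using \<open>0 < s\<close> by (intro DERIV_cdivide DERIV_cmult has_real_derivative_powr) auto
    moreover have "c * r powr p * ((1-p) * s powr (1-p-1)) / (1-p) = c * (r/s) powr p"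
      using \<open>0 < s\<close> assms by (simp add: powr_divide powr_diff powr_minus_divide)
    ultimately show "(F has_vector_derivative c * (r/s) powr p) (at s within {u..v})"
      by (simp add: has_real_derivative_iff_has_vector_derivative[symmetric] has_field_derivative_at_within)
  qed
  moreover have "F x = c * r * (x/r) powr (1-p) / (1-p)" if "0 < x" for x
    using that assms by (simp add: F_def powr_divide powr_diff)
  ultimately show ?thesis using assms by (simp add: diff_divide_distrib right_diff_distrib)
qed

lemma powr_mult_le_iff:
  fixes r s p y z :: real
  assumes "0 < s" "0 < r"
  shows "s powr p * y \<le> r powr p * z \<longleftrightarrow> y \<le> z * (r/s) powr p"
    and "r powr p * z \<le> s powr p * y \<longleftrightarrow> z * (r/s) powr p \<le> y"
  using assms by (simp_all add: powr_divide field_simps)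

lemma filterlim_powr_at_top:
  fixes e :: real
  assumes "0 < e"
  shows "filterlim (\<lambda>x. x powr e) at_top at_top"
proof -
  have "filterlim (\<lambda>x. exp (e * ln x)) at_top at_top"
    using assms by (intro filterlim_compose[OF exp_at_top] filterlim_tendsto_pos_mult_at_top[OF tendsto_const] ln_at_top)
  then show ?thesis
    by (rule filterlim_cong[THEN iffD1, rotated -1]) (auto simp: powr_def eventually_at_top_dense)
qed

lemma tendsto_SUP_ereal_zero:
  fixes f :: "'a \<Rightarrow> 'b \<Rightarrow> real" and S :: "'a \<Rightarrow> 'b set"
  assumes "\<And>x y. 0 \<le> f x y"
    and "\<And>\<epsilon>. 0 < \<epsilon> \<Longrightarrow> eventually (\<lambda>x. S x \<noteq> {} \<and> (\<forall>y\<in>S x. f x y \<le> \<epsilon>)) F"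
  shows "((\<lambda>x. SUP y\<in>S x. ereal (f x y)) \<longlongrightarrow> 0) F"
proof (rule order_tendstoI)
  fix l :: ereal assume "l < 0"
  show "eventually (\<lambda>x. l < (SUP y\<in>S x. ereal (f x y))) F"
    using assms(2)[OF zero_less_one]
  proof eventually_elim
    case (elim x)
    then obtain y where "y \<in> S x" by auto
    have "l < ereal (f x y)" using \<open>l < 0\<close> assms(1)[of x y] by (simp add: order_less_le_trans)
    also have "\<dots> \<le> (SUP y\<in>S x. ereal (f x y))" using \<open>y \<in> S x\<close> by (rule SUP_upper)
    finally show ?case .
  qed
next
  fix u :: ereal assume "0 < u"
  then obtain z where "0 < ereal z" "ereal z < u" using ereal_dense2 by blast
  then have "0 < z" by simp
  show "eventually (\<lambda>x. (SUP y\<in>S x. ereal (f x y)) < u) F"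
    using assms(2)[OF half_gt_zero[OF \<open>0 < z\<close>]]
  proof eventually_elim
    case (elim x)
    then have "(SUP y\<in>S x. ereal (f x y)) \<le> ereal (z/2)" by (intro SUP_least) auto
    also have "\<dots> < ereal z" using \<open>0 < z\<close> by simp
    also note \<open>ereal z < u\<close>
    finally show ?case .
  qed
qed

lemma abs_divide_sub_le:
  fixes N D k1 k2 c e :: real
  assumes "0 < D" "0 < k1" "0 < k2" "D/k2 \<le> N" "N \<le> D/k1" "1/k1 \<le> c + e" "c - e \<le> 1/k2"
  shows "\<bar>N/D - c\<bar> \<le> e"
proof -
  have "N/D \<le> 1/k1" "1/k2 \<le> N/D" using assms by (simp_all add: field_simps)
  then show ?thesis using assms(6,7) by linarith
qed

lemma exists_inverse_perturbation:
  fixes c \<epsilon> :: real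
  assumes "0 < c" "0 < \<epsilon>"
  obtains \<eta> where "0 < \<eta>" "\<eta> < c" "1/(c-\<eta>) \<le> 1/c + \<epsilon>" "1/c - \<epsilon> \<le> 1/(c+\<eta>)"
proof -
  have minus: "((\<lambda>\<eta>. 1/(c-\<eta>)) \<longlongrightarrow> 1/c) (at_right 0)"
    and plus: "((\<lambda>\<eta>. 1/(c+\<eta>)) \<longlongrightarrow> 1/c) (at_right 0)"
    using assms by (auto intro!: tendsto_eq_intros)
  have "eventually (\<lambda>\<eta>. \<eta> \<in> {0<..<c} \<and> dist (1/(c-\<eta>)) (1/c) < \<epsilon> \<and> dist (1/(c+\<eta>)) (1/c) < \<epsilon>) (at_right 0)"
    using assms tendstoD[OF minus] tendstoD[OF plus] by (intro eventually_conj eventually_at_right_real) auto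
  then obtain \<eta> where "\<eta> \<in> {0<..<c}" "dist (1/(c-\<eta>)) (1/c) < \<epsilon>" "dist (1/(c+\<eta>)) (1/c) < \<epsilon>"
    using eventually_happens'[OF trivial_limit_at_right_real] by blast
  then show thesis by (intro that[of \<eta>]) (auto simp: dist_real_def)
qed

lemma Potter_integral_bounds_left:
  fixes f :: "real \<Rightarrow> real" and \<alpha> \<eta> a b N :: real
  assumes "0 < \<eta>" "\<eta> < 1 - \<alpha>" "0 < a" "a < b" "0 \<le> f b"
    and f: "(f has_integral N) {a..b}"
    and Potter: "\<And>s. s \<in> {a..b} \<Longrightarrow> f b * (b/s) powr (\<alpha>-\<eta>) \<le> f s \<and> f s \<le> f b * (b/s) powr (\<alpha>+\<eta>)"
  shows "f b * b * (1 - (a/b) powr (1-\<alpha>)) / (1-\<alpha>+\<eta>) \<le> N"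
    and "N \<le> f b * b * (1 - (a/b) powr (1-\<alpha>)) / (1-\<alpha>-\<eta>)"
proof -
  have ab: "0 \<le> a/b" "a/b \<le> 1" "0 \<le> f b * b" using assms by auto
  have "f b * b * (1 - (a/b) powr (1-\<alpha>)) / (1-\<alpha>+\<eta>) \<le> f b * b * (1 - (a/b) powr (1-\<alpha>+\<eta>)) / (1-\<alpha>+\<eta>)"
    using assms ab by (intro divide_right_mono mult_left_mono diff_left_mono powr_mono') auto
  also have "\<dots> \<le> N"
    using has_integral_scaled_powr[of a b b "\<alpha>-\<eta>" "f b"] assms
    by (intro has_integral_le[OF _ f]) (auto simp: Potter algebra_simps)
  finally show "f b * b * (1 - (a/b) powr (1-\<alpha>)) / (1-\<alpha>+\<eta>) \<le> N" .
  have "N \<le> f b * b * (1 - (a/b) powr (1-\<alpha>-\<eta>)) / (1-\<alpha>-\<eta>)"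
    using has_integral_scaled_powr[of a b b "\<alpha>+\<eta>" "f b"] assms
    by (intro has_integral_le[OF f]) (auto simp: Potter algebra_simps)
  also have "\<dots> \<le> f b * b * (1 - (a/b) powr (1-\<alpha>)) / (1-\<alpha>-\<eta>)"
    using assms ab by (intro divide_right_mono mult_left_mono diff_left_mono powr_mono') auto
  finally show "N \<le> f b * b * (1 - (a/b) powr (1-\<alpha>)) / (1-\<alpha>-\<eta>)" .
qed

lemma Potter_integral_bounds_right:
  fixes f :: "real \<Rightarrow> real" and \<alpha> \<eta> a b N :: real
  assumes "0 < \<eta>" "\<eta> < \<alpha> - 1" "0 < b" "b < a" "0 \<le> f b"
    and f: "(f has_integral N) {b..a}"
    and Potter: "\<And>s. s \<in> {b..a} \<Longrightarrow> f b * (b/s) powr (\<alpha>+\<eta>) \<le> f s \<and> f s \<le> f b * (b/s) powr (\<alpha>-\<eta>)"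
  shows "f b * b * (1 - (a/b) powr (1-\<alpha>)) / (\<alpha>-1+\<eta>) \<le> N"
    and "N \<le> f b * b * (1 - (a/b) powr (1-\<alpha>)) / (\<alpha>-1-\<eta>)"
proof -
  have ab: "1 \<le> a/b" "0 \<le> f b * b" using assms by auto
  have "f b * b * (1 - (a/b) powr (1-\<alpha>)) / (\<alpha>-1+\<eta>) \<le> f b * b * (1 - (a/b) powr (1-\<alpha>-\<eta>)) / (\<alpha>-1+\<eta>)"
    using assms ab by (intro divide_right_mono mult_left_mono diff_left_mono powr_mono) auto
  also have "\<dots> = f b * b * ((a/b) powr (1-\<alpha>-\<eta>) - 1) / (1-\<alpha>-\<eta>)"
    using assms by (simp add: field_simps)
  also have "\<dots> \<le> N"
    using has_integral_scaled_powr[of b a b "\<alpha>+\<eta>" "f b"] assms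
    by (intro has_integral_le[OF _ f]) (auto simp: Potter algebra_simps)
  finally show "f b * b * (1 - (a/b) powr (1-\<alpha>)) / (\<alpha>-1+\<eta>) \<le> N" .
  have "N \<le> f b * b * ((a/b) powr (1-\<alpha>+\<eta>) - 1) / (1-\<alpha>+\<eta>)"
    using has_integral_scaled_powr[of b a b "\<alpha>-\<eta>" "f b"] assms
    by (intro has_integral_le[OF f]) (auto simp: Potter algebra_simps)
  also have "\<dots> = f b * b * (1 - (a/b) powr (1-\<alpha>+\<eta>)) / (\<alpha>-1-\<eta>)"
    using assms by (simp add: field_simps)
  also have "\<dots> \<le> f b * b * (1 - (a/b) powr (1-\<alpha>)) / (\<alpha>-1-\<eta>)"
    using assms ab by (intro divide_right_mono mult_left_mono diff_left_mono powr_mono) auto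
  finally show "N \<le> f b * b * (1 - (a/b) powr (1-\<alpha>)) / (\<alpha>-1-\<eta>)" .
qed

lemma regvar_pos_le_one:
  assumes "regvar \<alpha> \<rho>" "0 \<le> t"
  shows "0 < \<rho> t" "\<rho> t \<le> 1"
  using assms unfolding regvar_def by auto

lemma regvar_set_integrable:
  assumes "regvar \<alpha> \<rho>"
  shows "set_integrable lborel {0..t} \<rho>"
  unfolding set_integrable_def
proof (rule Bochner_Integration.integrable_bound)
  show "integrable lborel (indicator {0..t} :: real \<Rightarrow> real)"
    by (rule integrable_real_indicator) (auto simp: emeasure_lborel_Icc_eq)
  have "(\<lambda>x. indicator {0..} x *\<^sub>R \<rho> x) \<in> borel_measurable borel"
    using assms unfolding regvar_def set_borel_measurable_def by auto
  then have "(\<lambda>x. indicator {0..t} x * (indicator {0..} x *\<^sub>R \<rho> x)) \<in> borel_measurable lborel"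
    by simp
  also have "(\<lambda>x. indicator {0..t} x * (indicator {0..} x *\<^sub>R \<rho> x)) = (\<lambda>x. indicator {0..t} x *\<^sub>R \<rho> x)"
    by (auto simp: indicator_def fun_eq_iff)
  finally show "(\<lambda>x. indicator {0..t} x *\<^sub>R \<rho> x) \<in> borel_measurable lborel" .
  show "AE x in lborel. norm (indicator {0..t} x *\<^sub>R \<rho> x) \<le> norm (indicator {0..t} x :: real)"
    using regvar_pos_le_one[OF assms] by (intro AE_I2) (auto simp: indicator_def less_imp_le)
qed

lemma Irho_has_integral:
  assumes "regvar \<alpha> \<rho>" "0 \<le> a" "a \<le> b"
  shows "(\<rho> has_integral (Irho \<rho> b - Irho \<rho> a)) {a..b}"
proof -
  have Irho: "Irho \<rho> t = integral {0..t} \<rho>" "\<rho> integrable_on {0..t}" for t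
    using set_borel_integral_eq_integral[OF regvar_set_integrable[OF assms(1)]]
    unfolding Irho_def by auto
  have "\<rho> integrable_on {a..b}"
    using integrable_on_subinterval[OF Irho(2)[of b]] assms by auto
  moreover have "integral {a..b} \<rho> = Irho \<rho> b - Irho \<rho> a"
    using Henstock_Kurzweil_Integration.integral_combine[OF assms(2,3) Irho(2)] by (simp add: Irho(1))
  ultimately show ?thesis by (simp add: has_integral_integral)
qed

definition Potter_monotone :: "real \<Rightarrow> (real \<Rightarrow> real) \<Rightarrow> bool" where
  "Potter_monotone \<alpha> \<rho> \<longleftrightarrow>
     (\<forall>\<eta>>0. ev_incr (\<lambda>x. x powr \<eta> * Lrho \<alpha> \<rho> x) \<and> ev_decr (\<lambda>x. x powr (-\<eta>) * Lrho \<alpha> \<rho> x))"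

lemma Potter_bounds:
  fixes \<alpha> \<eta> :: real
  assumes mono: "Potter_monotone \<alpha> \<rho>"
    and "0 < \<eta>"
  obtains x0 where "0 < x0"
    and "\<And>r s. x0 \<le> s \<Longrightarrow> s \<le> r \<Longrightarrow> \<rho> r * (r/s) powr (\<alpha>-\<eta>) \<le> \<rho> s \<and> \<rho> s \<le> \<rho> r * (r/s) powr (\<alpha>+\<eta>)"
    and "\<And>r s. x0 \<le> r \<Longrightarrow> r \<le> s \<Longrightarrow> \<rho> r * (r/s) powr (\<alpha>+\<eta>) \<le> \<rho> s \<and> \<rho> s \<le> \<rho> r * (r/s) powr (\<alpha>-\<eta>)"
proof -
  obtain x1 where x1: "\<And>x y. x1 \<le> x \<Longrightarrow> x \<le> y \<Longrightarrow> x powr \<eta> * Lrho \<alpha> \<rho> x \<le> y powr \<eta> * Lrho \<alpha> \<rho> y"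
    using mono \<open>0 < \<eta>\<close> unfolding Potter_monotone_def ev_incr_def by blast
  obtain x2 where x2: "\<And>x y. x2 \<le> x \<Longrightarrow> x \<le> y \<Longrightarrow> y powr (-\<eta>) * Lrho \<alpha> \<rho> y \<le> x powr (-\<eta>) * Lrho \<alpha> \<rho> x"
    using mono \<open>0 < \<eta>\<close> unfolding Potter_monotone_def ev_decr_def by blast
  define x0 where "x0 = max 1 (max x1 x2)"
  have Lrho_incr: "x powr (\<alpha>+\<eta>) * \<rho> x \<le> y powr (\<alpha>+\<eta>) * \<rho> y" if "x0 \<le> x" "x \<le> y" for x y
    using x1[of x y] that by (simp add: x0_def Lrho_def powr_add mult_ac)
  have Lrho_decr: "y powr (\<alpha>-\<eta>) * \<rho> y \<le> x powr (\<alpha>-\<eta>) * \<rho> x" if "x0 \<le> x" "x \<le> y" for x y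
    using x2[of x y] that by (simp add: x0_def Lrho_def powr_diff powr_minus_divide mult_ac)
  show thesis
  proof (rule that)
    show "0 < x0" by (simp add: x0_def)
  next
    fix r s assume "x0 \<le> s" "s \<le> r"
    moreover have "0 < s" "0 < r" using calculation by (auto simp: x0_def)
    ultimately show "\<rho> r * (r/s) powr (\<alpha>-\<eta>) \<le> \<rho> s \<and> \<rho> s \<le> \<rho> r * (r/s) powr (\<alpha>+\<eta>)"
      using Lrho_incr[of s r] Lrho_decr[of s r] powr_mult_le_iff[of s r] by simp
  next
    fix r s assume "x0 \<le> r" "r \<le> s"
    moreover have "0 < s" "0 < r" using calculation by (auto simp: x0_def)
    ultimately show "\<rho> r * (r/s) powr (\<alpha>+\<eta>) \<le> \<rho> s \<and> \<rho> s \<le> \<rho> r * (r/s) powr (\<alpha>-\<eta>)"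
      using Lrho_incr[of r s] Lrho_decr[of r s] powr_mult_le_iff[of s r] by simp
  qed
qed

lemma rho_mult_filterlim_at_top:
  assumes reg: "regvar \<alpha> \<rho>" and "\<alpha> < 1"
    and mono: "Potter_monotone \<alpha> \<rho>"
  shows "filterlim (\<lambda>b. \<rho> b * b) at_top at_top"
proof -
  define \<eta> where "\<eta> = (1-\<alpha>)/2"
  have "0 < \<eta>" using \<open>\<alpha> < 1\<close> by (simp add: \<eta>_def)
  obtain x0 where "0 < x0"
    and Potter: "\<And>r s. x0 \<le> r \<Longrightarrow> r \<le> s \<Longrightarrow> \<rho> r * (r/s) powr (\<alpha>+\<eta>) \<le> \<rho> s"
    using Potter_bounds[OF mono \<open>0 < \<eta>\<close>] by metis
  define C where "C = \<rho> x0 * x0 powr (\<alpha>+\<eta>)"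
  have "0 < C" using \<open>0 < x0\<close> regvar_pos_le_one[OF reg] by (simp add: C_def)
  have "filterlim (\<lambda>b. C * b powr \<eta>) at_top at_top"
    using \<open>0 < C\<close> \<open>0 < \<eta>\<close> by (intro filterlim_tendsto_pos_mult_at_top[OF tendsto_const] filterlim_powr_at_top)
  moreover have "eventually (\<lambda>b. C * b powr \<eta> \<le> \<rho> b * b) at_top"
    using eventually_ge_at_top[of x0]
  proof eventually_elim
    case (elim b)
    then have "0 < b" using \<open>0 < x0\<close> by simp
    have "C * b powr \<eta> = \<rho> x0 * (x0/b) powr (\<alpha>+\<eta>) * b"
      using \<open>0 < x0\<close> \<open>0 < b\<close> by (simp add: C_def \<eta>_def powr_divide field_simps flip: powr_add)
    also have "\<dots> \<le> \<rho> b * b"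
      using Potter[OF order_refl elim] \<open>0 < b\<close> by (simp add: mult_right_mono)
    finally show ?case .
  qed
  ultimately show ?thesis by (rule filterlim_at_top_mono)
qed

definition Irho_quot :: "real \<Rightarrow> (real \<Rightarrow> real) \<Rightarrow> real \<Rightarrow> real \<Rightarrow> real" where
  "Irho_quot \<alpha> \<rho> a b = (Irho \<rho> b - Irho \<rho> a) / (Lrho \<alpha> \<rho> b * (b powr (1-\<alpha>) - a powr (1-\<alpha>)))"

lemma Lrho_mult_powr_diff:
  assumes "0 \<le> a" "0 < b"
  shows "Lrho \<alpha> \<rho> b * (b powr (1-\<alpha>) - a powr (1-\<alpha>)) = \<rho> b * b * (1 - (a/b) powr (1-\<alpha>))"
  using assms by (cases "a = 0") (auto simp: Lrho_def powr_divide field_simps simp flip: powr_add)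

lemma Irho_quot_close_left:
  assumes reg: "regvar \<alpha> \<rho>" and "\<alpha> < 1"
    and mono: "Potter_monotone \<alpha> \<rho>"
    and "0 < \<epsilon>"
  obtains x0 where "0 < x0" "\<And>a b. x0 \<le> a \<Longrightarrow> a < b \<Longrightarrow> \<bar>Irho_quot \<alpha> \<rho> a b - 1/(1-\<alpha>)\<bar> \<le> \<epsilon>"
proof -
  obtain \<eta> where \<eta>: "0 < \<eta>" "\<eta> < 1-\<alpha>" "1/(1-\<alpha>-\<eta>) \<le> 1/(1-\<alpha>) + \<epsilon>" "1/(1-\<alpha>) - \<epsilon> \<le> 1/(1-\<alpha>+\<eta>)"
    using exists_inverse_perturbation[of "1-\<alpha>" \<epsilon>] \<open>\<alpha> < 1\<close> \<open>0 < \<epsilon>\<close> by auto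
  obtain x0 where "0 < x0"
    and Potter: "\<And>r s. x0 \<le> s \<Longrightarrow> s \<le> r \<Longrightarrow> \<rho> r * (r/s) powr (\<alpha>-\<eta>) \<le> \<rho> s \<and> \<rho> s \<le> \<rho> r * (r/s) powr (\<alpha>+\<eta>)"
    using Potter_bounds[OF mono \<open>0 < \<eta>\<close>] by metis
  show thesis
  proof (rule that[OF \<open>0 < x0\<close>])
    fix a b assume "x0 \<le> a" "a < b"
    then have "0 < a" "0 < \<rho> b" using \<open>0 < x0\<close> regvar_pos_le_one[OF reg] by auto
    have "0 < b" using \<open>0 < a\<close> \<open>a < b\<close> by simp
    have "(a/b) powr (1-\<alpha>) < 1 powr (1-\<alpha>)"
      using \<open>0 < a\<close> \<open>a < b\<close> \<open>\<alpha> < 1\<close> by (intro powr_less_mono2) auto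
    then have D: "0 < \<rho> b * b * (1 - (a/b) powr (1-\<alpha>))"
      using \<open>0 < \<rho> b\<close> \<open>0 < b\<close> by simp
    have integral: "(\<rho> has_integral (Irho \<rho> b - Irho \<rho> a)) {a..b}"
      using Irho_has_integral[OF reg] \<open>0 < a\<close> \<open>a < b\<close> by simp
    have Potter_ab: "\<rho> b * (b/s) powr (\<alpha>-\<eta>) \<le> \<rho> s \<and> \<rho> s \<le> \<rho> b * (b/s) powr (\<alpha>+\<eta>)"
      if "s \<in> {a..b}" for s
      using that \<open>x0 \<le> a\<close> by (intro Potter) auto
    note bounds = Potter_integral_bounds_left
        [OF \<eta>(1,2) \<open>0 < a\<close> \<open>a < b\<close> less_imp_le[OF \<open>0 < \<rho> b\<close>] integral Potter_ab]
    have "\<bar>(Irho \<rho> b - Irho \<rho> a) / (\<rho> b * b * (1 - (a/b) powr (1-\<alpha>))) - 1/(1-\<alpha>)\<bar> \<le> \<epsilon>"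
      by (rule abs_divide_sub_le[OF D _ _ bounds]) (use \<eta> in auto)
    then show "\<bar>Irho_quot \<alpha> \<rho> a b - 1/(1-\<alpha>)\<bar> \<le> \<epsilon>"
      using Lrho_mult_powr_diff[of a b] \<open>0 < a\<close> \<open>0 < b\<close> by (simp add: Irho_quot_def)
  qed
qed

lemma Irho_quot_close_right:
  assumes reg: "regvar \<alpha> \<rho>" and "1 < \<alpha>"
    and mono: "Potter_monotone \<alpha> \<rho>"
    and "0 < \<epsilon>"
  obtains x0 where "0 < x0"
    "\<And>a b. x0 \<le> b \<Longrightarrow> b < a \<Longrightarrow>
       \<bar>(Irho \<rho> a - Irho \<rho> b) / (Lrho \<alpha> \<rho> b * (b powr (1-\<alpha>) - a powr (1-\<alpha>))) - 1/(\<alpha>-1)\<bar> \<le> \<epsilon>"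
proof -
  obtain \<eta> where \<eta>: "0 < \<eta>" "\<eta> < \<alpha>-1" "1/(\<alpha>-1-\<eta>) \<le> 1/(\<alpha>-1) + \<epsilon>" "1/(\<alpha>-1) - \<epsilon> \<le> 1/(\<alpha>-1+\<eta>)"
    using exists_inverse_perturbation[of "\<alpha>-1" \<epsilon>] \<open>1 < \<alpha>\<close> \<open>0 < \<epsilon>\<close> by auto
  obtain x0 where "0 < x0"
    and Potter: "\<And>r s. x0 \<le> r \<Longrightarrow> r \<le> s \<Longrightarrow> \<rho> r * (r/s) powr (\<alpha>+\<eta>) \<le> \<rho> s \<and> \<rho> s \<le> \<rho> r * (r/s) powr (\<alpha>-\<eta>)"
    using Potter_bounds[OF mono \<open>0 < \<eta>\<close>] by metis
  show thesis
  proof (rule that[OF \<open>0 < x0\<close>])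
    fix a b assume "x0 \<le> b" "b < a"
    then have "0 < b" "0 < \<rho> b" using \<open>0 < x0\<close> regvar_pos_le_one[OF reg] by auto
    have "(a/b) powr (1-\<alpha>) < (a/b) powr 0"
      using \<open>0 < b\<close> \<open>b < a\<close> \<open>1 < \<alpha>\<close> by (intro powr_less_mono) auto
    then have D: "0 < \<rho> b * b * (1 - (a/b) powr (1-\<alpha>))"
      using \<open>0 < \<rho> b\<close> \<open>0 < b\<close> \<open>b < a\<close> by simp
    have integral: "(\<rho> has_integral (Irho \<rho> a - Irho \<rho> b)) {b..a}"
      using Irho_has_integral[OF reg] \<open>0 < b\<close> \<open>b < a\<close> by simp
    have Potter_ba: "\<rho> b * (b/s) powr (\<alpha>+\<eta>) \<le> \<rho> s \<and> \<rho> s \<le> \<rho> b * (b/s) powr (\<alpha>-\<eta>)"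
      if "s \<in> {b..a}" for s
      using that \<open>x0 \<le> b\<close> by (intro Potter) auto
    note bounds = Potter_integral_bounds_right
        [OF \<eta>(1,2) \<open>0 < b\<close> \<open>b < a\<close> less_imp_le[OF \<open>0 < \<rho> b\<close>] integral Potter_ba]
    have "\<bar>(Irho \<rho> a - Irho \<rho> b) / (\<rho> b * b * (1 - (a/b) powr (1-\<alpha>))) - 1/(\<alpha>-1)\<bar> \<le> \<epsilon>"
      by (rule abs_divide_sub_le[OF D _ _ bounds]) (use \<eta> in auto)
    then show "\<bar>(Irho \<rho> a - Irho \<rho> b) / (Lrho \<alpha> \<rho> b * (b powr (1-\<alpha>) - a powr (1-\<alpha>))) - 1/(\<alpha>-1)\<bar> \<le> \<epsilon>"
      using Lrho_mult_powr_diff[of a b] \<open>0 < b\<close> \<open>b < a\<close> by simp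
  qed
qed

lemma Irho_quot_near_origin:
  assumes reg: "regvar \<alpha> \<rho>" and "\<alpha> < 1" and "0 \<le> a" "a \<le> x0" "x0 < b"
  defines "t \<equiv> (x0/b) powr (1-\<alpha>)"
  shows "Irho_quot \<alpha> \<rho> x0 b * (1 - t) \<le> Irho_quot \<alpha> \<rho> a b"
    and "Irho_quot \<alpha> \<rho> a b \<le> Irho_quot \<alpha> \<rho> x0 b + x0 / (\<rho> b * b * (1 - t))"
proof -
  define M where "M = \<rho> b * b"
  define N where "N = Irho \<rho> b - Irho \<rho> x0"
  define E where "E = Irho \<rho> x0 - Irho \<rho> a"
  have "0 < b" "0 \<le> x0" using assms by auto
  then have "0 < M" using regvar_pos_le_one[OF reg] by (simp add: M_def)
  have "(a/b) powr (1-\<alpha>) \<le> t"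
    unfolding t_def using assms \<open>0 < b\<close> by (intro powr_mono2 divide_right_mono) auto
  moreover have "t < 1"
    unfolding t_def using powr_less_mono2[of "1-\<alpha>" "x0/b" 1] assms \<open>0 < b\<close> by simp
  ultimately have Da: "M * (1 - t) \<le> M * (1 - (a/b) powr (1-\<alpha>))" "M * (1 - (a/b) powr (1-\<alpha>)) \<le> M" "0 < M * (1 - t)"
    using \<open>0 < M\<close> by auto
  have quot: "Irho_quot \<alpha> \<rho> x0 b = N / (M * (1 - t))" "Irho_quot \<alpha> \<rho> a b = (N + E) / (M * (1 - (a/b) powr (1-\<alpha>)))"
    using Lrho_mult_powr_diff[of _ b \<alpha> \<rho>] assms \<open>0 < b\<close>
    by (simp_all add: Irho_quot_def M_def N_def E_def t_def)
  have \<rho>_bounds: "0 \<le> \<rho> s" "\<rho> s \<le> 1" if "s \<in> {a..b}" for s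
    using regvar_pos_le_one[OF reg, of s] that assms by auto
  have int_N: "(\<rho> has_integral N) {x0..b}"
    using Irho_has_integral[OF reg \<open>0 \<le> x0\<close>] assms by (simp add: N_def)
  have int_E: "(\<rho> has_integral E) {a..x0}"
    using Irho_has_integral[OF reg \<open>0 \<le> a\<close> \<open>a \<le> x0\<close>] by (simp add: E_def)
  have "0 \<le> N" by (rule has_integral_nonneg[OF int_N]) (use \<rho>_bounds assms in auto)
  have "0 \<le> E" by (rule has_integral_nonneg[OF int_E]) (use \<rho>_bounds assms in auto)
  have "((\<lambda>s. 1) has_integral x0 - a) {a..x0}"
    using has_integral_const_real[of "1::real" a x0] assms by simp
  then have "E \<le> x0 - a" by (rule has_integral_le[OF int_E]) (use \<rho>_bounds assms in auto)
  then have "E \<le> x0" using assms by simp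
  show "Irho_quot \<alpha> \<rho> x0 b * (1 - t) \<le> Irho_quot \<alpha> \<rho> a b"
  proof -
    have "Irho_quot \<alpha> \<rho> x0 b * (1 - t) = N / M" using Da \<open>t < 1\<close> by (simp add: quot)
    also have "\<dots> \<le> N / (M * (1 - (a/b) powr (1-\<alpha>)))"
      using Da \<open>0 \<le> N\<close> by (intro divide_left_mono) auto
    also have "\<dots> \<le> Irho_quot \<alpha> \<rho> a b"
      using Da \<open>0 \<le> E\<close> unfolding quot by (intro divide_right_mono) auto
    finally show ?thesis .
  qed
  show "Irho_quot \<alpha> \<rho> a b \<le> Irho_quot \<alpha> \<rho> x0 b + x0 / (\<rho> b * b * (1 - t))"
  proof -
    have "Irho_quot \<alpha> \<rho> a b \<le> (N + E) / (M * (1 - t))"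
      unfolding quot using Da \<open>0 \<le> N\<close> \<open>0 \<le> E\<close> by (intro divide_left_mono) auto
    also have "\<dots> \<le> Irho_quot \<alpha> \<rho> x0 b + x0 / (\<rho> b * b * (1 - t))"
      using Da \<open>E \<le> x0\<close> unfolding quot M_def add_divide_distrib by (intro add_left_mono divide_right_mono) auto
    finally show ?thesis .
  qed
qed

lemma Irho_quot_near_origin_close:
  assumes reg: "regvar \<alpha> \<rho>" and "\<alpha> < 1" and "0 \<le> a" "a \<le> x0" "x0 < b" "0 < x0" "0 < \<epsilon>"
    and close: "\<bar>Irho_quot \<alpha> \<rho> x0 b - 1/(1-\<alpha>)\<bar> \<le> \<epsilon>/2"
    and small_t: "(x0/b) powr (1-\<alpha>) < min (1/2) (\<epsilon>*(1-\<alpha>)/2)"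
    and large_M: "4*x0/\<epsilon> \<le> \<rho> b * b"
  shows "\<bar>Irho_quot \<alpha> \<rho> a b - 1/(1-\<alpha>)\<bar> \<le> \<epsilon>"
proof -
  define t where "t = (x0/b) powr (1-\<alpha>)"
  define Q where "Q = Irho_quot \<alpha> \<rho> x0 b"
  have "0 \<le> t" "t \<le> 1/2" "t \<le> \<epsilon>*(1-\<alpha>)/2" using small_t by (auto simp: t_def)
  have Q: "1/(1-\<alpha>) - \<epsilon>/2 \<le> Q" "Q \<le> 1/(1-\<alpha>) + \<epsilon>/2"
    using close unfolding Q_def by linarith+
  note near = Irho_quot_near_origin[OF reg \<open>\<alpha> < 1\<close> \<open>0 \<le> a\<close> \<open>a \<le> x0\<close> \<open>x0 < b\<close>, folded t_def Q_def]
  have expand: "(c - \<epsilon>/2) * (1 - t) = c - \<epsilon>/2 - c * t + \<epsilon>*t/2" for c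
    by (simp add: field_simps)
  have "1/(1-\<alpha>) * t \<le> \<epsilon>/2" using \<open>t \<le> \<epsilon>*(1-\<alpha>)/2\<close> \<open>\<alpha> < 1\<close> by (simp add: field_simps)
  then have "1/(1-\<alpha>) - \<epsilon> \<le> (1/(1-\<alpha>) - \<epsilon>/2) * (1 - t)"
    unfolding expand using mult_nonneg_nonneg[of \<epsilon> t] \<open>0 \<le> t\<close> \<open>0 < \<epsilon>\<close> by linarith
  also have "\<dots> \<le> Q * (1 - t)" using Q \<open>t \<le> 1/2\<close> by (intro mult_right_mono) auto
  also have "\<dots> \<le> Irho_quot \<alpha> \<rho> a b" using near(1) by simp
  finally have lower: "1/(1-\<alpha>) - \<epsilon> \<le> Irho_quot \<alpha> \<rho> a b" .
  have "0 < 4*x0/\<epsilon>" using \<open>0 < \<epsilon>\<close> \<open>0 < x0\<close> by simp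
  then have "0 < \<rho> b * b" using large_M by linarith
  have "2*x0/\<epsilon> \<le> \<rho> b * b * (1/2)" using large_M by simp
  also have "\<dots> \<le> \<rho> b * b * (1 - t)"
    using \<open>0 < \<rho> b * b\<close> \<open>t \<le> 1/2\<close> by (intro mult_left_mono) auto
  finally have "x0 / (\<rho> b * b * (1 - t)) \<le> x0 / (2*x0/\<epsilon>)"
    using \<open>0 < x0\<close> \<open>0 < \<epsilon>\<close> \<open>0 < \<rho> b * b\<close> \<open>t \<le> 1/2\<close> by (intro divide_left_mono) auto
  also have "\<dots> = \<epsilon>/2" using \<open>0 < x0\<close> by simp
  finally have "x0 / (\<rho> b * b * (1 - t)) \<le> \<epsilon>/2" .
  then have upper: "Irho_quot \<alpha> \<rho> a b \<le> 1/(1-\<alpha>) + \<epsilon>" using near(2) Q by linarith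
  show ?thesis using lower upper by (simp add: abs_le_iff)
qed

lemma Irho_quot_tendsto_left:
  assumes reg: "regvar \<alpha> \<rho>" and "\<alpha> < 1"
    and mono: "Potter_monotone \<alpha> \<rho>"
  shows "((\<lambda>b. SUP a\<in>{0..<b}. ereal \<bar>Irho_quot \<alpha> \<rho> a b - 1/(1-\<alpha>)\<bar>) \<longlongrightarrow> 0) at_top"
proof (rule tendsto_SUP_ereal_zero)
  fix \<epsilon> :: real assume "0 < \<epsilon>"
  obtain x0 where "0 < x0"
    and close: "\<And>a b. x0 \<le> a \<Longrightarrow> a < b \<Longrightarrow> \<bar>Irho_quot \<alpha> \<rho> a b - 1/(1-\<alpha>)\<bar> \<le> \<epsilon>/2"
    using Irho_quot_close_left[OF reg \<open>\<alpha> < 1\<close> mono half_gt_zero[OF \<open>0 < \<epsilon>\<close>]] by metis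
  have "((\<lambda>b. x0/b) \<longlongrightarrow> 0) at_top"
    by (rule tendsto_divide_0[OF tendsto_const filterlim_at_top_imp_at_infinity[OF filterlim_ident]])
  moreover have "eventually (\<lambda>b. 0 \<le> x0/b) at_top"
    using eventually_gt_at_top[of 0] by eventually_elim (use \<open>0 < x0\<close> in simp)
  ultimately have "((\<lambda>b. (x0/b) powr (1-\<alpha>)) \<longlongrightarrow> 0) at_top"
    using \<open>\<alpha> < 1\<close> by (intro tendsto_zero_powrI[OF _ tendsto_const]) auto
  then have small_t: "eventually (\<lambda>b. (x0/b) powr (1-\<alpha>) < min (1/2) (\<epsilon>*(1-\<alpha>)/2)) at_top"
    using \<open>0 < \<epsilon>\<close> \<open>\<alpha> < 1\<close> by (intro order_tendstoD(2)) auto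
  have large_M: "eventually (\<lambda>b. 4*x0/\<epsilon> \<le> \<rho> b * b) at_top"
    using rho_mult_filterlim_at_top[OF reg \<open>\<alpha> < 1\<close> mono] by (simp add: filterlim_at_top)
  show "eventually (\<lambda>b. {0..<b} \<noteq> {} \<and> (\<forall>a\<in>{0..<b}. \<bar>Irho_quot \<alpha> \<rho> a b - 1/(1-\<alpha>)\<bar> \<le> \<epsilon>)) at_top"
    using eventually_gt_at_top[of x0] small_t large_M
  proof eventually_elim
    case (elim b)
    have "\<bar>Irho_quot \<alpha> \<rho> a b - 1/(1-\<alpha>)\<bar> \<le> \<epsilon>" if "0 \<le> a" "a < b" for a
    proof (cases "x0 \<le> a")
      case True
      then show ?thesis using close[OF True \<open>a < b\<close>] \<open>0 < \<epsilon>\<close> by simp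
    next
      case False
      then have "a \<le> x0" by simp
      from Irho_quot_near_origin_close[OF reg \<open>\<alpha> < 1\<close> \<open>0 \<le> a\<close> this elim(1) \<open>0 < x0\<close> \<open>0 < \<epsilon>\<close>
          close[OF order_refl elim(1)] elim(2,3)]
      show ?thesis .
    qed
    then show ?case using elim(1) \<open>0 < x0\<close> by auto
  qed
qed simp

lemma Irho_quot_tendsto_right:
  assumes "regvar \<alpha> \<rho>" "1 < \<alpha>"
    and "Potter_monotone \<alpha> \<rho>"
  shows "((\<lambda>b. SUP a\<in>{b<..}. ereal \<bar>(Irho \<rho> a - Irho \<rho> b) /
            (Lrho \<alpha> \<rho> b * (b powr (1-\<alpha>) - a powr (1-\<alpha>))) - 1/(\<alpha>-1)\<bar>) \<longlongrightarrow> 0) at_top"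
proof (rule tendsto_SUP_ereal_zero)
  fix \<epsilon> :: real assume "0 < \<epsilon>"
  obtain x0 where close: "\<And>a b. x0 \<le> b \<Longrightarrow> b < a \<Longrightarrow>
       \<bar>(Irho \<rho> a - Irho \<rho> b) / (Lrho \<alpha> \<rho> b * (b powr (1-\<alpha>) - a powr (1-\<alpha>))) - 1/(\<alpha>-1)\<bar> \<le> \<epsilon>"
    using Irho_quot_close_right[OF assms \<open>0 < \<epsilon>\<close>] by metis
  show "eventually (\<lambda>b. {b<..} \<noteq> {} \<and> (\<forall>a\<in>{b<..}. \<bar>(Irho \<rho> a - Irho \<rho> b) /
            (Lrho \<alpha> \<rho> b * (b powr (1-\<alpha>) - a powr (1-\<alpha>))) - 1/(\<alpha>-1)\<bar> \<le> \<epsilon>)) at_top"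
    using eventually_ge_at_top[of x0] by eventually_elim (auto intro: close)
qed simp

theorem lemma2p8:
  fixes \<alpha> :: real and \<rho> :: "real \<Rightarrow> real"
  assumes "\<alpha> \<ge> 0" and "regvar \<alpha> \<rho>"
    and "\<forall>\<eta>>0. ev_incr (\<lambda>x. x powr \<eta> * Lrho \<alpha> \<rho> x) \<and> ev_decr (\<lambda>x. x powr (-\<eta>) * Lrho \<alpha> \<rho> x)"
  shows "(\<alpha> < 1 \<longrightarrow> ((\<lambda>b. SUP a\<in>{0..<b}. ereal \<bar>(Irho \<rho> b - Irho \<rho> a) /
              (Lrho \<alpha> \<rho> b * (b powr (1 - \<alpha>) - a powr (1 - \<alpha>))) - 1 / (1 - \<alpha>)\<bar>) \<longlongrightarrow> 0) at_top) \<and>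
    (\<alpha> > 1 \<longrightarrow> ((\<lambda>b. SUP a\<in>{b<..}. ereal \<bar>(Irho \<rho> a - Irho \<rho> b) /
              (Lrho \<alpha> \<rho> b * (b powr (1 - \<alpha>) - a powr (1 - \<alpha>))) - 1 / (\<alpha> - 1)\<bar>) \<longlongrightarrow> 0) at_top)"
proof (intro conjI impI)
  assume "\<alpha> < 1"
  from Irho_quot_tendsto_left[OF assms(2) this assms(3)[folded Potter_monotone_def]]
  show "((\<lambda>b. SUP a\<in>{0..<b}. ereal \<bar>(Irho \<rho> b - Irho \<rho> a) /
          (Lrho \<alpha> \<rho> b * (b powr (1 - \<alpha>) - a powr (1 - \<alpha>))) - 1 / (1 - \<alpha>)\<bar>) \<longlongrightarrow> 0) at_top"
    unfolding Irho_quot_def .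
next
  assume "\<alpha> > 1"
  from Irho_quot_tendsto_right[OF assms(2) this assms(3)[folded Potter_monotone_def]]
  show "((\<lambda>b. SUP a\<in>{b<..}. ereal \<bar>(Irho \<rho> a - Irho \<rho> b) /
          (Lrho \<alpha> \<rho> b * (b powr (1 - \<alpha>) - a powr (1 - \<alpha>))) - 1 / (\<alpha> - 1)\<bar>) \<longlongrightarrow> 0) at_top" .
qed

end
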